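(* Let $X$ be a real Hilbert space, $A,B\colon X\rightrightarrows X$ maximally monotone, $T:=\operatorname{Id}-J_A+J_BR_A$, $D:=\operatorname{dom}A-\operatorname{dom}B$, $R:=\operatorname{ran}A+\operatorname{ran}B$, $v_D:=P_{\overline D}(0)$, $v_R:=P_{\overline R}(0)$, and assume $\overline{\operatorname{ran}}(\operatorname{Id}-T)=\overline{D\cap R}=\overline D\cap\overline R$. Let $x\in X$. Then (i) $(J_AT^nx)_{n\in\mathbb N}$ is asymptotically regular if and only if $v_R=0$; (ii) $(J_{A^{-1}}T^nx)_{n\in\mathbb N}$ is asymptotically regular if and only if $v_D=0$.
   Context: $J_C:=(\operatorname{Id}+C)^{-1}$, $R_C:=2J_C-\operatorname{Id}$; $P_S$ is the projection onto a nonempty closed convex set. A sequence $(y_n)$ is asymptotically regular if $y_n-y_{n+1}\to0$. *)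

theory Defs
  imports "HOL-Analysis.Analysis"
begin

text \<open>Set-valued operators X \<rightrightarrows> X are modelled as functions 'a \<Rightarrow> 'a set.
 A real Hilbert space is a type of class real_inner and complete_space.\<close>

definition mono_op :: "('a::real_inner \<Rightarrow> 'a set) \<Rightarrow> bool" where
  "mono_op A \<longleftrightarrow> (\<forall>x y u v. u \<in> A x \<longrightarrow> v \<in> A y \<longrightarrow> 0 \<le> inner (x - y) (u - v))"

definition max_mono_op :: "('a::real_inner \<Rightarrow> 'a set) \<Rightarrow> bool" where
  "max_mono_op A \<longleftrightarrow> mono_op A \<and>
     (\<forall>B. mono_op B \<and> (\<forall>x. A x \<subseteq> B x) \<longrightarrow> B = A)"

definition dom_op :: "('a \<Rightarrow> 'b set) \<Rightarrow> 'a set" where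
  "dom_op A = {x. A x \<noteq> {}}"

definition ran_op :: "('a \<Rightarrow> 'b set) \<Rightarrow> 'b set" where
  "ran_op A = (\<Union>x. A x)"

definition inv_op :: "('a \<Rightarrow> 'b set) \<Rightarrow> 'b \<Rightarrow> 'a set" where
  "inv_op A = (\<lambda>u. {x. u \<in> A x})"

text \<open>Resolvent J_A = (Id + A)^{-1}: J_A x is the (unique, for monotone A) y with x \<in> y + A y.\<close>
definition resolvent :: "('a::real_vector \<Rightarrow> 'a set) \<Rightarrow> 'a \<Rightarrow> 'a" where
  "resolvent A x = (THE y. x - y \<in> A y)"

definition reflected_resolvent :: "('a::real_vector \<Rightarrow> 'a set) \<Rightarrow> 'a \<Rightarrow> 'a" where
  "reflected_resolvent A x = 2 *\<^sub>R resolvent A x - x"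

definition DR_op :: "('a::real_vector \<Rightarrow> 'a set) \<Rightarrow> ('a \<Rightarrow> 'a set) \<Rightarrow> 'a \<Rightarrow> 'a" where
  "DR_op A B x = x - resolvent A x + resolvent B (reflected_resolvent A x)"

text \<open>Projection onto a set (closest point); well defined for nonempty closed convex sets.\<close>
definition proj :: "'a::metric_space set \<Rightarrow> 'a \<Rightarrow> 'a" where
  "proj S x = (SOME p. p \<in> S \<and> (\<forall>y\<in>S. dist x p \<le> dist x y))"

definition asymp_regular :: "(nat \<Rightarrow> 'a::real_normed_vector) \<Rightarrow> bool" where
  "asymp_regular y \<longleftrightarrow> (\<lambda>n. y n - y (Suc n)) \<longlonglongrightarrow> 0"

end

theory Submission
  imports Defs
begin

text \<open>
  Write \<open>y\<^sub>n = T\<^sup>n x\<close>, \<open>a\<^sub>n = J\<^sub>A y\<^sub>n\<close>, \<open>a\<^sub>n\<^sup>* = y\<^sub>n - a\<^sub>n \<in> A a\<^sub>n\<close>, \<open>b\<^sub>n = J\<^sub>B (2 a\<^sub>n - y\<^sub>n)\<close> and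
  \<open>b\<^sub>n\<^sup>* = 2 a\<^sub>n - y\<^sub>n - b\<^sub>n \<in> B b\<^sub>n\<close>. The step \<open>w\<^sub>n = y\<^sub>n - y\<^sub>n\<^sub>+\<^sub>1\<close> equals both
  \<open>a\<^sub>n - b\<^sub>n \<in> D\<close> and \<open>a\<^sub>n\<^sup>* + b\<^sub>n\<^sup>* \<in> R\<close>, and it splits as \<open>w\<^sub>n = u\<^sub>n + u\<^sub>n\<^sup>*\<close> with
  \<open>u\<^sub>n = a\<^sub>n - a\<^sub>n\<^sub>+\<^sub>1 = a\<^sub>n\<^sub>+\<^sub>1\<^sup>* + b\<^sub>n\<^sup>* \<in> R\<close>, \<open>u\<^sub>n\<^sup>* = a\<^sub>n\<^sup>* - a\<^sub>n\<^sub>+\<^sub>1\<^sup>* = a\<^sub>n\<^sub>+\<^sub>1 - b\<^sub>n \<in> D\<close>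
  and \<open>\<langle>u\<^sub>n, u\<^sub>n\<^sup>*\<rangle> \<ge> 0\<close> by monotonicity of \<open>A\<close>; as \<open>J\<^bsub>A\<^sup>-\<^sup>1\<^esub> = Id - J\<^sub>A\<close>, the \<open>u\<^sub>n\<^sup>*\<close> are
  the steps of \<open>J\<^bsub>A\<^sup>-\<^sup>1\<^esub> T\<^sup>n x\<close>. Since \<open>T\<close> is firmly nonexpansive, \<open>\<parallel>w\<^sub>n\<parallel>\<close> decreases to the
  minimal displacement \<open>\<delta>\<close>, and by hypothesis \<open>\<delta>\<close> bounds the norms on
  \<open>closure D \<inter> closure R\<close> from below. If \<open>0 \<in> closure R\<close>, the midpoint of \<open>u\<^sub>n\<^sup>*\<close> and
  \<open>w\<^sub>n\<^sub>+\<^sub>1\<close> lies in both closures (which are convex because \<open>A\<close> and \<open>B\<close> are maximally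
  monotone), because \<open>u\<^sub>n\<^sup>* + w\<^sub>n\<^sub>+\<^sub>1 = a\<^sub>n\<^sup>* + b\<^sub>n\<^sub>+\<^sub>1\<^sup>* \<in> R\<close>; so \<open>\<parallel>u\<^sub>n\<^sup>*\<parallel>\<close> is at least about
  \<open>\<delta>\<close>, and \<open>\<parallel>u\<^sub>n\<parallel>\<^sup>2 \<le> \<parallel>w\<^sub>n\<parallel>\<^sup>2 - \<parallel>u\<^sub>n\<^sup>*\<parallel>\<^sup>2 \<longrightarrow> 0\<close>. The case of \<open>D\<close> is symmetric, and the
  converse implications hold because \<open>u\<^sub>n \<in> R\<close> and \<open>u\<^sub>n\<^sup>* \<in> D\<close>.

  Minty's theorem, which makes the resolvents well defined, is derived from Kirszbraun's
  extension theorem; instead of weak compactness, the infinite-dimensional step uses a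
  minimal-norm argument for directed families of bounded closed convex sets.
\<close>

section \<open>Hilbert space geometry\<close>

lemma norm_sq_add_ge_if_inner_nonneg:
  fixes u v :: "'a::real_inner"
  assumes "0 \<le> inner u v"
  shows "(norm u)\<^sup>2 + (norm v)\<^sup>2 \<le> (norm (u + v))\<^sup>2"
  using assms by (simp add: power2_norm_eq_inner inner_add_left inner_add_right inner_commute)

lemma norm_diff_le_norm_add_if_inner_nonneg:
  fixes u v :: "'a::real_inner"
  assumes "0 \<le> inner u v"
  shows "norm (u - v) \<le> norm (u + v)"
  using assms by (simp add: norm_le inner_add_left inner_add_right inner_diff_left inner_diff_right inner_commute)

lemma midpoint_in_convex:
  assumes "convex S" "x \<in> S" "y \<in> S"
  shows "midpoint x y \<in> S"
  using convexD[OF assms, of "1/2" "1/2"] by (simp add: midpoint_def scaleR_add_right)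

lemma Inf_norm_le_norm_closure:
  fixes S :: "'a::real_normed_vector set"
  assumes "z \<in> closure S"
  shows "Inf (norm ` S) \<le> norm z"
proof -
  have "closure S \<subseteq> {z. Inf (norm ` S) \<le> norm z}"
  proof (rule closure_minimal)
    have "bdd_below (norm ` S)"
      by (rule bdd_belowI[of _ 0]) auto
    thus "S \<subseteq> {z. Inf (norm ` S) \<le> norm z}"
      by (auto intro: cInf_lower)
    show "closed {z. Inf (norm ` S) \<le> norm z}"
      by (intro closed_Collect_le continuous_intros)
  qed
  thus ?thesis
    using assms by blast
qed

lemma Inf_norm_le_norm:
  fixes S :: "'a::real_normed_vector set"
  shows "z \<in> S \<Longrightarrow> Inf (norm ` S) \<le> norm z"
  using Inf_norm_le_norm_closure closure_subset by blast

lemma Inf_norm_nonneg: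
  fixes S :: "'a::real_normed_vector set"
  shows "S \<noteq> {} \<Longrightarrow> 0 \<le> Inf (norm ` S)"
  by (intro cInf_greatest) auto

lemma Inf_norm_less_iff:
  fixes S :: "'a::real_normed_vector set"
  assumes "S \<noteq> {}"
  shows "Inf (norm ` S) < r \<longleftrightarrow> (\<exists>y\<in>S. norm y < r)"
proof -
  have "bdd_below (norm ` S)"
    by (rule bdd_belowI[of _ 0]) auto
  thus ?thesis
    using cInf_less_iff[of "norm ` S" r] assms by simp
qed

lemma convex_norm_diff_sq_le:
  fixes K :: "'a::real_inner set"
  assumes "convex K" "x \<in> K" "y \<in> K" "norm x \<le> h" "norm y \<le> h"
  shows "(norm (x - y))\<^sup>2 \<le> 4 * h\<^sup>2 - 4 * (Inf (norm ` K))\<^sup>2"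
proof -
  have "Inf (norm ` K) \<le> norm (midpoint x y)"
    using midpoint_in_convex[OF assms(1-3)] by (rule Inf_norm_le_norm)
  hence "2 * Inf (norm ` K) \<le> norm (x + y)"
    by (simp add: midpoint_def)
  hence "(2 * Inf (norm ` K))\<^sup>2 \<le> (norm (x + y))\<^sup>2"
    using Inf_norm_nonneg[of K] assms(2) by (intro power_mono) auto
  moreover have "(norm x)\<^sup>2 \<le> h\<^sup>2" "(norm y)\<^sup>2 \<le> h\<^sup>2"
    using assms(4,5) by (auto intro: power_mono)
  moreover have "(norm (x - y))\<^sup>2 + (norm (x + y))\<^sup>2 = 2 * (norm x)\<^sup>2 + 2 * (norm y)\<^sup>2"
    by (simp add: power2_norm_eq_inner inner_diff_left inner_diff_right inner_add_left
        inner_add_right inner_commute)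
  ultimately show ?thesis
    by (simp add: power_mult_distrib)
qed

lemma Cauchy_if_dist_le_add:
  fixes X :: "nat \<Rightarrow> 'a::metric_space"
  assumes "\<And>m n. dist (X m) (X n) \<le> \<gamma> m + \<gamma> n" and "\<gamma> \<longlonglongrightarrow> 0"
  shows "Cauchy X"
proof (rule metric_CauchyI)
  fix e :: real assume "0 < e"
  then obtain N where "\<And>n. n \<ge> N \<Longrightarrow> \<gamma> n < e / 2"
    using order_tendstoD(2)[OF assms(2), of "e / 2"] by (auto simp: eventually_sequentially)
  thus "\<exists>N. \<forall>m\<ge>N. \<forall>n\<ge>N. dist (X m) (X n) < e"
    using assms(1) by (smt (verit, best) field_sum_of_halves)
qed

text \<open>In a Hilbert space this replaces weak compactness: along the directed family the minimal
  norms increase to a supremum, and near-minimal points of its members form a Cauchy sequence.\<close>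

lemma Inter_directed_closed_convex_nonempty:
  fixes \<K> :: "'a::{real_inner,complete_space} set set"
  assumes nonempty: "\<K> \<noteq> {}"
    and closed_convex: "\<And>K. K \<in> \<K> \<Longrightarrow> closed K \<and> convex K \<and> K \<noteq> {}"
    and directed: "\<And>K1 K2. K1 \<in> \<K> \<Longrightarrow> K2 \<in> \<K> \<Longrightarrow> \<exists>K\<in>\<K>. K \<subseteq> K1 \<inter> K2"
    and bounded: "\<And>K. K \<in> \<K> \<Longrightarrow> \<exists>y\<in>K. norm y \<le> M"
  shows "\<Inter>\<K> \<noteq> {}"
proof -
  define d where "d K = Inf (norm ` K)" for K :: "'a set"
  define s where "s = Sup (d ` \<K>)"
  have "d K \<le> M" if K: "K \<in> \<K>" for K
  proof -
    obtain y where "y \<in> K" "norm y \<le> M"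
      using bounded[OF K] by blast
    thus ?thesis
      unfolding d_def using Inf_norm_le_norm[of y K] by linarith
  qed
  hence "bdd_above (d ` \<K>)"
    by (intro bdd_aboveI[of _ M]) auto
  hence d_le_s: "d K \<le> s" if "K \<in> \<K>" for K
    unfolding s_def using that by (intro cSup_upper) auto
  have s_approx: "\<exists>K\<in>\<K>. s - e < d K" if "0 < e" for e
    using less_cSup_iff[OF _ \<open>bdd_above (d ` \<K>)\<close>, of "s - e"] nonempty that
    by (auto simp: s_def)
  have "0 \<le> s"
    using nonempty closed_convex Inf_norm_nonneg d_le_s unfolding d_def
    by (meson all_not_in_conv order_trans)
  txt \<open>Near-minimal points of a member whose minimal norm is close to \<open>s\<close> are close to each
    other: this is where uniform convexity of the norm enters.\<close>
  define \<beta> where "\<beta> e = sqrt (4 * (s + e)\<^sup>2 - 4 * (max 0 (s - e))\<^sup>2)" for e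
  have close: "norm (y1 - y2) \<le> \<beta> e"
    if "K \<in> \<K>" "s - e \<le> d K" "y1 \<in> K" "y2 \<in> K" "norm y1 \<le> s + e" "norm y2 \<le> s + e"
    for K e y1 y2
  proof -
    have "(max 0 (s - e))\<^sup>2 \<le> (d K)\<^sup>2"
      using that(2) Inf_norm_nonneg[of K] closed_convex[OF that(1)]
      by (intro power_mono) (auto simp: d_def)
    moreover have "(norm (y1 - y2))\<^sup>2 \<le> 4 * (s + e)\<^sup>2 - 4 * (d K)\<^sup>2"
      unfolding d_def using closed_convex[OF that(1)] that(3-6) by (intro convex_norm_diff_sq_le) auto
    ultimately show ?thesis
      unfolding \<beta>_def by (intro real_le_rsqrt) linarith
  qed
  define \<epsilon> where "\<epsilon> n = inverse (real (Suc n))" for n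
  have \<epsilon>_pos: "0 < \<epsilon> n" for n
    by (simp add: \<epsilon>_def)
  have "(\<lambda>n. \<beta> (\<epsilon> n)) \<longlonglongrightarrow> sqrt (4 * (s + 0)\<^sup>2 - 4 * (max 0 (s - 0))\<^sup>2)"
    unfolding \<beta>_def \<epsilon>_def by (intro tendsto_intros LIMSEQ_inverse_real_of_nat)
  hence \<beta>_lim: "(\<lambda>n. \<beta> (\<epsilon> n)) \<longlonglongrightarrow> 0"
    using \<open>0 \<le> s\<close> by simp
  obtain Ks where Ks: "\<And>n. Ks n \<in> \<K>" "\<And>n. s - \<epsilon> n < d (Ks n)"
    using s_approx[OF \<epsilon>_pos] by metis
  have near: "\<exists>z\<in>K \<inter> Ks n. norm z \<le> s + e" if K: "K \<in> \<K>" and "0 < e" for K n e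
  proof -
    obtain K' where "K' \<in> \<K>" "K' \<subseteq> K \<inter> Ks n"
      using directed[OF K Ks(1)] by blast
    moreover have "d K' < s + e"
      using d_le_s[OF \<open>K' \<in> \<K>\<close>] \<open>0 < e\<close> by simp
    ultimately show ?thesis
      using closed_convex Inf_norm_less_iff unfolding d_def by (meson less_imp_le subsetD)
  qed
  have "\<exists>y\<in>Ks n. norm y \<le> s + \<epsilon> n" for n
    using near[OF Ks(1) \<epsilon>_pos[of n], of n] by blast
  then obtain ys where ys: "\<And>n. ys n \<in> Ks n" "\<And>n. norm (ys n) \<le> s + \<epsilon> n"
    by metis
  have ys_close: "norm (z - ys n) \<le> \<beta> (\<epsilon> n)" if "z \<in> Ks n" "norm z \<le> s + \<epsilon> n" for z n
    using close[OF Ks(1) less_imp_le[OF Ks(2)] that(1) ys(1) that(2) ys(2)] .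
  have "Cauchy ys"
  proof (rule Cauchy_if_dist_le_add[OF _ \<beta>_lim])
    fix m n
    obtain z where "z \<in> Ks m \<inter> Ks n" "norm z \<le> s + min (\<epsilon> m) (\<epsilon> n)"
      using near[where K="Ks m" and n=n and e="min (\<epsilon> m) (\<epsilon> n)"] Ks(1) \<epsilon>_pos by auto
    hence "norm (z - ys m) \<le> \<beta> (\<epsilon> m)" "norm (z - ys n) \<le> \<beta> (\<epsilon> n)"
      by (auto intro!: ys_close)
    thus "dist (ys m) (ys n) \<le> \<beta> (\<epsilon> m) + \<beta> (\<epsilon> n)"
      using dist_triangle[of "ys m" "ys n" z] by (simp add: dist_norm norm_minus_commute)
  qed
  then obtain y where y: "ys \<longlonglongrightarrow> y"
    using Cauchy_convergent_iff convergent_def by blast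
  have "y \<in> K" if K: "K \<in> \<K>" for K
  proof -
    have "\<exists>z\<in>K \<inter> Ks n. norm z \<le> s + \<epsilon> n" for n
      using near[OF K \<epsilon>_pos[of n]] .
    then obtain zs where zs: "\<And>n. zs n \<in> K \<inter> Ks n" "\<And>n. norm (zs n) \<le> s + \<epsilon> n"
      by metis
    have "(\<lambda>n. zs n - ys n) \<longlonglongrightarrow> 0"
      by (intro Lim_null_comparison[OF _ \<beta>_lim] always_eventually allI ys_close)
        (use zs in auto)
    hence "(\<lambda>n. ys n + (zs n - ys n)) \<longlonglongrightarrow> y + 0"
      by (intro tendsto_intros y)
    hence "zs \<longlonglongrightarrow> y"
      by simp
    thus "y \<in> K"
      using closed_sequentially[of K zs y] closed_convex[OF K] zs(1) by blast
  qed
  thus ?thesis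
    by blast
qed

lemma closed_convex_closest_point_exists:
  fixes S :: "'a::{real_inner,complete_space} set"
  assumes "closed S" "convex S" "S \<noteq> {}"
  shows "\<exists>p\<in>S. \<forall>y\<in>S. dist x p \<le> dist x y"
proof -
  define d where "d = Inf (dist x ` S)"
  have bdd: "bdd_below (dist x ` S)"
    by (rule bdd_belowI[of _ 0]) auto
  have d_le: "d \<le> dist x y" if "y \<in> S" for y
    unfolding d_def using bdd that by (intro cInf_lower) auto
  have "0 \<le> d"
    unfolding d_def using assms(3) by (intro cInf_greatest) auto
  have approx: "\<exists>y\<in>S. dist x y < r" if "d < r" for r
    using cInf_less_iff[OF _ bdd, of r] assms(3) that by (auto simp: d_def)
  define \<K> where "\<K> = (\<lambda>r. S \<inter> cball x r) ` {d<..d + 1}"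
  have "\<Inter>\<K> \<noteq> {}"
  proof (rule Inter_directed_closed_convex_nonempty)
    show "\<K> \<noteq> {}"
      by (simp add: \<K>_def)
    show "closed K \<and> convex K \<and> K \<noteq> {}" if "K \<in> \<K>" for K
      using that assms approx by (fastforce simp: \<K>_def intro: convex_Int)
    show "\<exists>K\<in>\<K>. K \<subseteq> K1 \<inter> K2" if K12: "K1 \<in> \<K>" "K2 \<in> \<K>" for K1 K2
    proof -
      obtain r1 r2 where "r1 \<in> {d<..d + 1}" "r2 \<in> {d<..d + 1}"
        "K1 = S \<inter> cball x r1" "K2 = S \<inter> cball x r2"
        using K12 unfolding \<K>_def by blast
      thus ?thesis
        by (intro bexI[of _ "S \<inter> cball x (min r1 r2)"]) (auto simp: \<K>_def)
    qed
    show "\<exists>y\<in>K. norm y \<le> norm x + d + 1" if K: "K \<in> \<K>" for K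
    proof -
      obtain r where "r \<in> {d<..d + 1}" "K = S \<inter> cball x r"
        using K unfolding \<K>_def by blast
      moreover obtain y where "y \<in> S" "dist x y < r"
        using approx \<open>r \<in> {d<..d + 1}\<close> by auto
      moreover have "norm y \<le> norm x + dist x y"
        using norm_triangle_ineq[of x "y - x"] by (simp add: dist_norm norm_minus_commute)
      ultimately show ?thesis
        by (intro bexI[of _ y]) auto
    qed
  qed
  then obtain p where p: "\<And>r. r \<in> {d<..d + 1} \<Longrightarrow> p \<in> S \<inter> cball x r"
    unfolding \<K>_def by blast
  have "dist x p \<le> d"
  proof (rule field_le_epsilon)
    fix e :: real assume "0 < e"
    hence "dist x p \<le> d + min e 1"
      using p[of "d + min e 1"] by auto
    thus "dist x p \<le> d + e"
      by linarith
  qed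
  moreover have "p \<in> S"
    using p[of "d + 1"] by simp
  ultimately show ?thesis
    using d_le order_trans by blast
qed

lemma proj_eq_self_iff:
  fixes S :: "'a::{real_inner,complete_space} set"
  assumes "closed S" "convex S" "S \<noteq> {}"
  shows "proj S x = x \<longleftrightarrow> x \<in> S"
proof
  assume "proj S x = x"
  moreover have "proj S x \<in> S"
    unfolding proj_def using closed_convex_closest_point_exists[OF assms, of x]
    by (rule someI2_bex) blast
  ultimately show "x \<in> S"
    by simp
next
  assume "x \<in> S"
  show "proj S x = x"
    unfolding proj_def by (rule some_equality) (use \<open>x \<in> S\<close> in auto)
qed

lemma convex_closure_if_combinations_in_closure:
  fixes S :: "'a::real_normed_vector set"
  assumes "\<And>x y u. x \<in> S \<Longrightarrow> y \<in> S \<Longrightarrow> 0 \<le> u \<Longrightarrow> u \<le> 1 \<Longrightarrow> (1 - u) *\<^sub>R x + u *\<^sub>R y \<in> closure S"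
  shows "convex (closure S)"
  unfolding convex_alt
proof (intro ballI allI impI)
  fix x y and u :: real
  assume xy: "x \<in> closure S" "y \<in> closure S" and u: "0 \<le> u \<and> u \<le> 1"
  define f :: "'a \<times> 'a \<Rightarrow> 'a" where "f p = (1 - u) *\<^sub>R fst p + u *\<^sub>R snd p" for p
  have "continuous_on (closure (S \<times> S)) f"
    unfolding f_def by (intro continuous_intros)
  moreover have "f ` (S \<times> S) \<subseteq> closure S"
    using assms u by (auto simp: f_def)
  ultimately have "f ` closure (S \<times> S) \<subseteq> closure S"
    by (intro image_closure_subset) auto
  hence "f (x, y) \<in> closure S"
    using xy by (auto simp: closure_Times)
  thus "(1 - u) *\<^sub>R x + u *\<^sub>R y \<in> closure S"
    by (simp add: f_def)
qed

lemma convex_closure_image_Times: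
  fixes f :: "'a::real_normed_vector \<times> 'b::real_normed_vector \<Rightarrow> 'c::real_normed_vector"
  assumes "bounded_linear f" "convex (closure X)" "convex (closure Y)"
  shows "convex (closure (f ` (X \<times> Y)))"
proof -
  have "f ` (closure X \<times> closure Y) \<subseteq> closure (f ` (X \<times> Y))"
    using closure_bounded_linear_image_subset[OF assms(1), of "X \<times> Y"] by (simp add: closure_Times)
  hence "closure (f ` (closure X \<times> closure Y)) \<subseteq> closure (f ` (X \<times> Y))"
    by (intro closure_minimal) auto
  moreover have "closure (f ` (X \<times> Y)) \<subseteq> closure (f ` (closure X \<times> closure Y))"
    by (intro closure_mono image_mono Sigma_mono closure_subset)
  ultimately have "closure (f ` (X \<times> Y)) = closure (f ` (closure X \<times> closure Y))"
    by (rule subset_antisym[rotated])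
  thus ?thesis
    using assms bounded_linear.linear[OF assms(1)]
    by (simp add: convex_closure convex_linear_image convex_Times)
qed

lemma convex_closure_differences:
  fixes X Y :: "'a::real_normed_vector set"
  assumes "convex (closure X)" "convex (closure Y)"
  shows "convex (closure {x - y | x y. x \<in> X \<and> y \<in> Y})"
proof -
  have "{x - y | x y. x \<in> X \<and> y \<in> Y} = (\<lambda>p. fst p - snd p) ` (X \<times> Y)"
    by force
  moreover have "bounded_linear (\<lambda>p :: 'a \<times> 'a. fst p - snd p)"
    by (intro bounded_linear_sub bounded_linear_fst bounded_linear_snd)
  ultimately show ?thesis
    using convex_closure_image_Times[OF _ assms] by simp
qed

lemma convex_closure_sums:
  fixes X Y :: "'a::real_normed_vector set"
  assumes "convex (closure X)" "convex (closure Y)"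
  shows "convex (closure {x + y | x y. x \<in> X \<and> y \<in> Y})"
proof -
  have "{x + y | x y. x \<in> X \<and> y \<in> Y} = (\<lambda>p. fst p + snd p) ` (X \<times> Y)"
    by force
  moreover have "bounded_linear (\<lambda>p :: 'a \<times> 'a. fst p + snd p)"
    by (intro bounded_linear_add bounded_linear_fst bounded_linear_snd)
  ultimately show ?thesis
    using convex_closure_image_Times[OF _ assms] by simp
qed

section \<open>Kirszbraun's extension theorem\<close>

lemma continuous_on_Max_finite:
  fixes f :: "'i \<Rightarrow> 'a::topological_space \<Rightarrow> real"
  assumes "finite I" "I \<noteq> {}" "\<And>i. i \<in> I \<Longrightarrow> continuous_on S (f i)"
  shows "continuous_on S (\<lambda>y. Max ((\<lambda>i. f i y) ` I))"
  using assms
proof (induction I rule: finite_ne_induct)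
  case (insert i I)
  have "(\<lambda>y. Max ((\<lambda>i. f i y) ` insert i I)) = (\<lambda>y. max (f i y) (Max ((\<lambda>i. f i y) ` I)))"
    using insert by auto
  thus ?case
    using insert by (auto intro!: continuous_on_max)
qed simp

lemma convex_hull_finite_image_weights:
  fixes q :: "'i \<Rightarrow> 'a::real_vector"
  assumes "finite J" "y \<in> convex hull (q ` J)"
  obtains u where "\<forall>j\<in>J. 0 \<le> u j" "sum u J = 1" "(\<Sum>j\<in>J. u j *\<^sub>R q j) = y"
proof -
  obtain v where v: "\<forall>x\<in>q ` J. 0 \<le> v x" "sum v (q ` J) = 1" "(\<Sum>x\<in>q ` J. v x *\<^sub>R x) = y"
    using assms convex_hull_finite[of "q ` J"] by auto
  define J' where "J' = inv_into J q ` q ` J"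
  have "J' \<subseteq> J" "q ` J' = q ` J"
    by (auto simp: J'_def inv_into_into image_inv_into_cancel)
  have "inj_on q J'"
    by (auto simp: J'_def intro!: inj_onI) (metis f_inv_into_f imageI)
  define u where "u j = (if j \<in> J' then v (q j) else 0)" for j
  have "sum u J = sum u J'" "(\<Sum>j\<in>J. u j *\<^sub>R q j) = (\<Sum>j\<in>J'. u j *\<^sub>R q j)"
    using \<open>J' \<subseteq> J\<close> assms(1) by (intro sum.mono_neutral_right; simp add: u_def)+
  moreover have "sum u J' = sum v (q ` J')" "(\<Sum>j\<in>J'. u j *\<^sub>R q j) = (\<Sum>x\<in>q ` J'. v x *\<^sub>R x)"
    using \<open>inj_on q J'\<close> by (simp_all add: sum.reindex u_def)
  ultimately show ?thesis
    using that[of u] v \<open>q ` J' = q ` J\<close> by (auto simp: u_def)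
qed

lemma sum_sum_weighted_sq_dist:
  fixes x :: "'i \<Rightarrow> 'a::real_inner"
  assumes "finite S" "sum u S = 1"
  shows "(\<Sum>i\<in>S. \<Sum>j\<in>S. u i * u j * (norm (x i - x j))\<^sup>2)
       = 2 * (\<Sum>i\<in>S. u i * (norm (x i - c))\<^sup>2) - 2 * (norm ((\<Sum>i\<in>S. u i *\<^sub>R x i) - c))\<^sup>2"
proof -
  define y where "y i = x i - c" for i
  define a where "a i = inner (y i) (y i)" for i
  have xy: "x i - x j = y i - y j" for i j
    by (simp add: y_def)
  have mean: "(\<Sum>i\<in>S. u i *\<^sub>R x i) - c = (\<Sum>i\<in>S. u i *\<^sub>R y i)"
    using assms by (simp add: y_def scaleR_diff_right sum_subtractf flip: scaleR_left.sum)
  have sq: "(norm (y i - y j))\<^sup>2 = a i + a j - 2 * inner (y i) (y j)" for i j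
    unfolding power2_norm_eq_inner a_def by (simp add: inner_diff_left inner_diff_right inner_commute)
  have sum_a_left: "(\<Sum>j\<in>S. u i * u j * a i) = u i * a i" for i
  proof -
    have "(\<Sum>j\<in>S. u i * u j * a i) = u i * a i * sum u S"
      by (simp add: sum_distrib_left mult_ac)
    thus ?thesis
      using assms(2) by simp
  qed
  have sum_a_right: "(\<Sum>j\<in>S. u i * u j * a j) = u i * (\<Sum>j\<in>S. u j * a j)" for i
    by (simp add: sum_distrib_left mult_ac)
  have inner_mean: "inner (\<Sum>i\<in>S. u i *\<^sub>R y i) (\<Sum>j\<in>S. u j *\<^sub>R y j)
      = (\<Sum>i\<in>S. \<Sum>j\<in>S. u i * u j * inner (y i) (y j))"
    by (simp add: inner_sum_left inner_sum_right sum_distrib_left mult.assoc)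
      (intro sum.cong refl, simp add: inner_commute)
  have "(\<Sum>i\<in>S. \<Sum>j\<in>S. u i * u j * (norm (x i - x j))\<^sup>2)
      = (\<Sum>i\<in>S. (\<Sum>j\<in>S. u i * u j * a i) + (\<Sum>j\<in>S. u i * u j * a j)
          - 2 * (\<Sum>j\<in>S. u i * u j * inner (y i) (y j)))"
    unfolding xy sq by (simp add: algebra_simps sum.distrib sum_subtractf sum_distrib_left)
  also have "\<dots> = (\<Sum>i\<in>S. u i * a i) + (\<Sum>i\<in>S. u i * (\<Sum>j\<in>S. u j * a j))
      - 2 * (\<Sum>i\<in>S. \<Sum>j\<in>S. u i * u j * inner (y i) (y j))"
    unfolding sum_a_left sum_a_right by (simp add: sum.distrib sum_subtractf sum_distrib_left)
  also have "(\<Sum>i\<in>S. u i * (\<Sum>j\<in>S. u j * a j)) = (\<Sum>j\<in>S. u j * a j)"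
    using assms(2) by (simp flip: sum_distrib_right)
  finally show ?thesis
    unfolding mean inner_mean[symmetric] by (simp add: power2_norm_eq_inner a_def y_def)
qed

lemma eventually_sq_dist_less_at_right:
  fixes y e q :: "'a::real_inner"
  assumes "(norm (y - q))\<^sup>2 < t \<or> (norm (y - q))\<^sup>2 \<le> t \<and> inner (y - q) e < 0"
  shows "\<forall>\<^sub>F s in at_right 0. (norm (y + s *\<^sub>R e - q))\<^sup>2 < t"
  using assms
proof
  assume "(norm (y - q))\<^sup>2 < t"
  moreover have "((\<lambda>s. (norm (y + s *\<^sub>R e - q))\<^sup>2) \<longlongrightarrow> (norm (y + 0 *\<^sub>R e - q))\<^sup>2) (at_right 0)"
    by (intro tendsto_intros)
  ultimately show ?thesis
    by (simp add: order_tendstoD(2))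
next
  assume descent: "(norm (y - q))\<^sup>2 \<le> t \<and> inner (y - q) e < 0"
  have expand: "(norm (y + s *\<^sub>R e - q))\<^sup>2 = (norm (y - q))\<^sup>2 + s * (2 * inner (y - q) e + s * (norm e)\<^sup>2)"
    for s
    unfolding power2_norm_eq_inner
    by (simp add: inner_add_left inner_add_right inner_diff_left inner_diff_right inner_commute
        algebra_simps)
  have "((\<lambda>s. 2 * inner (y - q) e + s * (norm e)\<^sup>2) \<longlongrightarrow> 2 * inner (y - q) e + 0 * (norm e)\<^sup>2)
      (at_right 0)"
    by (intro tendsto_intros)
  hence "\<forall>\<^sub>F s in at_right 0. 2 * inner (y - q) e + s * (norm e)\<^sup>2 < 0"
    using descent by (simp add: order_tendstoD(2))
  with eventually_at_right_less show ?thesis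
  proof eventually_elim
    case (elim s)
    hence "s * (2 * inner (y - q) e + s * (norm e)\<^sup>2) < 0"
      by (simp add: mult_pos_neg)
    thus ?case
      unfolding expand using descent by linarith
  qed
qed

lemma eventually_Max_sq_dist_less_at_right:
  fixes q :: "'i \<Rightarrow> 'a::real_inner" and c :: "'i \<Rightarrow> real" and I :: "'i set"
  defines "f \<equiv> \<lambda>y. Max ((\<lambda>i. (norm (y - q i))\<^sup>2 - c i) ` I)"
  assumes I: "finite I" "I \<noteq> {}"
    and descent: "\<And>i. i \<in> I \<Longrightarrow> (norm (y - q i))\<^sup>2 - c i = f y \<Longrightarrow> inner (y - q i) e < 0"
  shows "\<forall>\<^sub>F s in at_right 0. f (y + s *\<^sub>R e) < f y"
proof -
  have "\<forall>\<^sub>F s in at_right 0. \<forall>i\<in>I. (norm (y + s *\<^sub>R e - q i))\<^sup>2 < f y + c i"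
  proof (rule eventually_ball_finite[OF I(1)], intro ballI eventually_sq_dist_less_at_right)
    fix i assume "i \<in> I"
    moreover have "(norm (y - q i))\<^sup>2 - c i \<le> f y"
      unfolding f_def using I \<open>i \<in> I\<close> by (intro Max_ge) auto
    ultimately show "(norm (y - q i))\<^sup>2 < f y + c i \<or>
        (norm (y - q i))\<^sup>2 \<le> f y + c i \<and> inner (y - q i) e < 0"
      using descent[of i] by force
  qed
  thus ?thesis
  proof eventually_elim
    case (elim s)
    thus ?case
      unfolding f_def using I by (subst Max_less_iff) (auto simp: algebra_simps)
  qed
qed

lemma Max_sq_dist_minimizer_in_active_hull:
  fixes q :: "'i \<Rightarrow> 'a::real_inner" and c :: "'i \<Rightarrow> real" and I :: "'i set"
  defines "f \<equiv> \<lambda>y. Max ((\<lambda>i. (norm (y - q i))\<^sup>2 - c i) ` I)"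
  assumes I: "finite I" "I \<noteq> {}" and H: "convex H" "q ` I \<subseteq> H"
    and min: "y0 \<in> H" "\<And>y. y \<in> H \<Longrightarrow> f y0 \<le> f y"
  shows "y0 \<in> convex hull (q ` {i \<in> I. (norm (y0 - q i))\<^sup>2 - c i = f y0})"
proof (rule ccontr)
  define C where "C = convex hull (q ` {i \<in> I. (norm (y0 - q i))\<^sup>2 - c i = f y0})"
  assume "y0 \<notin> C"
  have "f y0 \<in> (\<lambda>i. (norm (y0 - q i))\<^sup>2 - c i) ` I"
    unfolding f_def using I by (intro Max_in) auto
  hence "compact C" "C \<noteq> {}"
    using I by (auto simp: C_def finite_imp_compact_convex_hull)
  moreover have "continuous_on C (dist y0)"
    by (intro continuous_intros)
  ultimately obtain P where P: "P \<in> C" "\<And>z. z \<in> C \<Longrightarrow> dist y0 P \<le> dist y0 z"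
    by (metis continuous_attains_inf)
  define e where "e = P - y0"
  have "0 < (norm e)\<^sup>2"
    using P(1) \<open>y0 \<notin> C\<close> by (auto simp: e_def)
  txt \<open>Moving from \<open>y0\<close> towards \<open>P\<close> strictly decreases every active term, because \<open>P\<close> is
    the projection of \<open>y0\<close> onto the hull of the active points.\<close>
  have "inner (y0 - q i) e < 0" if "i \<in> I" "(norm (y0 - q i))\<^sup>2 - c i = f y0" for i
  proof -
    have "inner (y0 - P) (q i - P) \<le> 0"
      using P that compact_imp_closed[OF \<open>compact C\<close>]
      by (intro any_closest_point_dot[of C]) (auto simp: C_def hull_inc)
    moreover have "inner (y0 - q i) e = - (norm e)\<^sup>2 + inner (y0 - P) (q i - P)"
      by (simp add: e_def power2_norm_eq_inner inner_diff_left inner_diff_right inner_commute)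
    ultimately show ?thesis
      using \<open>0 < (norm e)\<^sup>2\<close> by linarith
  qed
  hence "\<forall>\<^sub>F s in at_right 0. f (y0 + s *\<^sub>R e) < f y0"
    unfolding f_def using I by (intro eventually_Max_sq_dist_less_at_right) auto
  moreover have "\<forall>\<^sub>F s in at_right 0. s \<in> {0<..<1::real}"
    by (rule eventually_at_right_real) simp
  ultimately obtain s :: real where s: "s \<in> {0<..<1}" "f (y0 + s *\<^sub>R e) < f y0"
    using eventually_happens'[OF trivial_limit_at_right_real] eventually_conj by blast
  have "C \<subseteq> H"
    unfolding C_def using H by (intro hull_minimal) auto
  have "y0 + s *\<^sub>R e = (1 - s) *\<^sub>R y0 + s *\<^sub>R P"
    by (simp add: e_def algebra_simps)
  also have "\<dots> \<in> H"
    using s(1) H(1) min(1) P(1) \<open>C \<subseteq> H\<close> by (intro convexD) auto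
  finally show False
    using min(2) s(2) by fastforce
qed

lemma kirszbraun_finite:
  fixes q p :: "'i \<Rightarrow> 'a::real_inner"
  assumes I: "finite I"
    and lipschitz: "\<And>i j. i \<in> I \<Longrightarrow> j \<in> I \<Longrightarrow> norm (q i - q j) \<le> norm (p i - p j)"
  shows "\<exists>y. \<forall>i\<in>I. norm (y - q i) \<le> norm (z - p i)"
proof (cases "I = {}")
  case False
  define f where "f y = Max ((\<lambda>i. (norm (y - q i))\<^sup>2 - (norm (p i - z))\<^sup>2) ` I)" for y
  define H where "H = convex hull (q ` I)"
  have "continuous_on H f"
    unfolding f_def using I False by (intro continuous_on_Max_finite) (auto intro!: continuous_intros)
  moreover have "compact H" "H \<noteq> {}"
    using I False by (simp_all add: H_def finite_imp_compact_convex_hull)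
  ultimately obtain y0 where y0: "y0 \<in> H" "\<And>y. y \<in> H \<Longrightarrow> f y0 \<le> f y"
    using continuous_attains_inf by metis
  define J where "J = {i \<in> I. (norm (y0 - q i))\<^sup>2 - (norm (p i - z))\<^sup>2 = f y0}"
  have "finite J"
    using I by (simp add: J_def)
  have "y0 \<in> convex hull (q ` J)"
    unfolding J_def f_def
    by (rule Max_sq_dist_minimizer_in_active_hull[OF I False convex_convex_hull])
      (use y0 in \<open>auto simp: H_def f_def hull_inc\<close>)
  then obtain u where u: "\<forall>j\<in>J. 0 \<le> u j" "sum u J = 1" "(\<Sum>j\<in>J. u j *\<^sub>R q j) = y0"
    using convex_hull_finite_image_weights[OF \<open>finite J\<close>] by blast
  txt \<open>Comparing the weighted pairwise spreads of the active \<open>q j\<close> and \<open>p j\<close> forces \<open>f y0 \<le> 0\<close>.\<close>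
  have "2 * f y0 + 2 * (\<Sum>j\<in>J. u j * (norm (p j - z))\<^sup>2)
      = 2 * (\<Sum>j\<in>J. u j * (norm (q j - y0))\<^sup>2)"
    using u(2) by (simp add: J_def norm_minus_commute algebra_simps sum.distrib
        flip: sum_distrib_left sum_distrib_right)
  also have "\<dots> = (\<Sum>i\<in>J. \<Sum>j\<in>J. u i * u j * (norm (q i - q j))\<^sup>2)"
    using sum_sum_weighted_sq_dist[OF \<open>finite J\<close> u(2), of q y0] u(3) by simp
  also have "\<dots> \<le> (\<Sum>i\<in>J. \<Sum>j\<in>J. u i * u j * (norm (p i - p j))\<^sup>2)"
    using u(1) lipschitz by (intro sum_mono mult_left_mono power_mono) (auto simp: J_def)
  also have "\<dots> \<le> 2 * (\<Sum>j\<in>J. u j * (norm (p j - z))\<^sup>2)"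
    using sum_sum_weighted_sq_dist[OF \<open>finite J\<close> u(2), of p z] by simp
  finally have "f y0 \<le> 0"
    by simp
  have "norm (y0 - q i) \<le> norm (z - p i)" if "i \<in> I" for i
  proof -
    have "(norm (y0 - q i))\<^sup>2 - (norm (p i - z))\<^sup>2 \<le> f y0"
      unfolding f_def using I that by (intro Max_ge) auto
    with \<open>f y0 \<le> 0\<close> have "(norm (y0 - q i))\<^sup>2 \<le> (norm (p i - z))\<^sup>2"
      by linarith
    hence "norm (y0 - q i) \<le> norm (p i - z)"
      by (rule power2_le_imp_le) simp
    thus ?thesis
      by (simp add: norm_minus_commute)
  qed
  thus ?thesis
    by blast
qed auto

lemma kirszbraun_point:
  fixes q p :: "'i \<Rightarrow> 'a::{real_inner,complete_space}"
  assumes lipschitz: "\<And>i j. i \<in> I \<Longrightarrow> j \<in> I \<Longrightarrow> norm (q i - q j) \<le> norm (p i - p j)"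
  shows "\<exists>y. \<forall>i\<in>I. norm (y - q i) \<le> norm (z - p i)"
proof (cases "I = {}")
  case False
  then obtain i0 where "i0 \<in> I"
    by blast
  define B where "B F = (\<Inter>i\<in>F. cball (q i) (norm (z - p i)))" for F
  define \<K> where "\<K> = {B F | F. finite F \<and> i0 \<in> F \<and> F \<subseteq> I}"
  have mem_B: "y \<in> B F \<longleftrightarrow> (\<forall>i\<in>F. norm (y - q i) \<le> norm (z - p i))" for y F
    by (simp add: B_def dist_norm norm_minus_commute)
  have "\<Inter>\<K> \<noteq> {}"
  proof (rule Inter_directed_closed_convex_nonempty)
    show "\<K> \<noteq> {}"
      using \<open>i0 \<in> I\<close> by (auto simp: \<K>_def)
    show "closed K \<and> convex K \<and> K \<noteq> {}" if K: "K \<in> \<K>" for K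
    proof -
      obtain F where F: "finite F" "F \<subseteq> I" "K = B F"
        using K unfolding \<K>_def by blast
      have "\<exists>y. \<forall>i\<in>F. norm (y - q i) \<le> norm (z - p i)"
        using F lipschitz by (intro kirszbraun_finite) auto
      then obtain y where "y \<in> B F"
        by (auto simp: mem_B)
      moreover have "closed (B F)" "convex (B F)"
        unfolding B_def by (auto intro!: closed_INT convex_INT)
      ultimately show ?thesis
        using F(3) by blast
    qed
    show "\<exists>K\<in>\<K>. K \<subseteq> K1 \<inter> K2" if K12: "K1 \<in> \<K>" "K2 \<in> \<K>" for K1 K2
    proof -
      obtain F1 F2 where "finite F1" "i0 \<in> F1" "F1 \<subseteq> I" "K1 = B F1"
        and "finite F2" "F2 \<subseteq> I" "K2 = B F2"
        using K12 unfolding \<K>_def by blast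
      thus ?thesis
        by (intro bexI[of _ "B (F1 \<union> F2)"]) (auto simp: \<K>_def B_def)
    qed
    show "\<exists>y\<in>K. norm y \<le> norm (q i0) + norm (z - p i0)" if K: "K \<in> \<K>" for K
    proof -
      obtain F where F: "finite F" "i0 \<in> F" "F \<subseteq> I" "K = B F"
        using K unfolding \<K>_def by blast
      then obtain y where "\<forall>i\<in>F. norm (y - q i) \<le> norm (z - p i)"
        using kirszbraun_finite[of F q p z] lipschitz by blast
      moreover have "norm y \<le> norm (q i0) + norm (y - q i0)"
        using norm_triangle_ineq[of "q i0" "y - q i0"] by simp
      ultimately show ?thesis
        using F by (intro bexI[of _ y]) (auto simp: mem_B)
    qed
  qed
  then obtain y where y: "\<And>K. K \<in> \<K> \<Longrightarrow> y \<in> K"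
    by blast
  have "y \<in> B {i0, i}" if "i \<in> I" for i
    using that \<open>i0 \<in> I\<close> by (intro y) (auto simp: \<K>_def)
  thus ?thesis
    by (auto simp: mem_B)
qed auto

section \<open>Maximally monotone operators\<close>

lemma max_mono_op_memI:
  assumes max: "max_mono_op A" and related: "\<And>a a'. a' \<in> A a \<Longrightarrow> 0 \<le> inner (x - a) (v - a')"
  shows "v \<in> A x"
proof -
  define B where "B y = A y \<union> (if y = x then {v} else {})" for y
  have swap: "inner (a - x) (a' - v) = inner (x - a) (v - a')" for a a'
    by (metis inner_minus_left inner_minus_right minus_diff_eq)
  have "mono_op A"
    using max by (simp add: max_mono_op_def)
  hence "mono_op B"
    using related swap unfolding mono_op_def B_def by (auto split: if_splits)
  moreover have "A y \<subseteq> B y" for y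
    by (simp add: B_def)
  ultimately have "B = A"
    using max by (simp add: max_mono_op_def)
  moreover have "v \<in> B x"
    by (simp add: B_def)
  ultimately show ?thesis
    by simp
qed

text \<open>The Cayley transform \<open>a + a' \<mapsto> a - a'\<close> of the graph of \<open>A\<close> is nonexpansive; extending
  it to the point \<open>z\<close> by Kirszbraun's theorem produces the resolvent of \<open>A\<close> at \<open>z\<close>.\<close>

lemma minty_surjective:
  fixes A :: "'a::{real_inner,complete_space} \<Rightarrow> 'a set"
  assumes "max_mono_op A"
  shows "\<exists>x. z - x \<in> A x"
proof -
  have "mono_op A"
    using assms by (simp add: max_mono_op_def)
  define G where "G = {(a, a'). a' \<in> A a}"
  have "norm ((a - a') - (b - b')) \<le> norm ((a + a') - (b + b'))"
    if "(a, a') \<in> G" "(b, b') \<in> G" for a a' b b'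
  proof -
    have "0 \<le> inner (a - b) (a' - b')"
      using \<open>mono_op A\<close> that by (simp add: G_def mono_op_def)
    hence "norm ((a - b) - (a' - b')) \<le> norm ((a - b) + (a' - b'))"
      by (rule norm_diff_le_norm_add_if_inner_nonneg)
    thus ?thesis
      by (simp add: algebra_simps)
  qed
  then obtain y where y: "\<And>a a'. (a, a') \<in> G \<Longrightarrow> norm (y - (a - a')) \<le> norm (z - (a + a'))"
    using kirszbraun_point[of G "\<lambda>(a, a'). a - a'" "\<lambda>(a, a'). a + a'" z] by fastforce
  define x where "x = midpoint z y"
  have "0 \<le> inner (x - a) ((z - x) - a')" if "a' \<in> A a" for a a'
  proof -
    define U where "U = z - (a + a')"
    define W where "W = y - (a - a')"
    have "inner W W \<le> inner U U"
      using y[of a a'] that by (simp add: G_def U_def W_def norm_le)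
    hence "0 \<le> inner (U + W) (U - W)"
      by (simp add: inner_add_left inner_add_right inner_diff_left inner_diff_right inner_commute)
    moreover have "U + W = 2 *\<^sub>R (x - a)" "U - W = 2 *\<^sub>R ((z - x) - a')"
      by (simp_all add: U_def W_def x_def midpoint_def algebra_simps scaleR_2)
    ultimately show ?thesis
      by simp
  qed
  thus ?thesis
    using max_mono_op_memI[OF assms] by blast
qed

lemma resolvent_eqI:
  assumes "mono_op A" "y - a \<in> A a"
  shows "resolvent A y = a"
  unfolding resolvent_def
proof (rule the_equality)
  fix b assume "y - b \<in> A b"
  hence "0 \<le> inner (a - b) ((y - a) - (y - b))"
    using assms unfolding mono_op_def by blast
  hence "inner (a - b) (a - b) \<le> 0"
    by (simp add: inner_diff_right inner_commute)
  hence "inner (a - b) (a - b) = 0"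
    using inner_ge_zero[of "a - b"] by linarith
  thus "b = a"
    by simp
qed (rule assms(2))

lemma resolvent_in_graph:
  fixes A :: "'a::{real_inner,complete_space} \<Rightarrow> 'a set"
  assumes "max_mono_op A"
  shows "y - resolvent A y \<in> A (resolvent A y)"
proof -
  obtain a where "y - a \<in> A a"
    using minty_surjective[OF assms] by blast
  moreover have "mono_op A"
    using assms by (simp add: max_mono_op_def)
  ultimately show ?thesis
    using resolvent_eqI by metis
qed

lemma max_mono_op_scaleR:
  fixes A :: "'a::real_inner \<Rightarrow> 'a set"
  assumes max: "max_mono_op A" and "0 < \<gamma>"
  shows "max_mono_op (\<lambda>x. (*\<^sub>R) \<gamma> ` A x)"
proof -
  have mono_scaled: "mono_op (\<lambda>x. (*\<^sub>R) c ` B x)" if "mono_op B" "0 < c" for B and c :: real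
    using that unfolding mono_op_def by (auto simp flip: scaleR_diff_right)
  have "B = (\<lambda>x. (*\<^sub>R) \<gamma> ` A x)"
    if "mono_op B" and sub: "\<forall>x. (*\<^sub>R) \<gamma> ` A x \<subseteq> B x" for B
  proof -
    have "mono_op (\<lambda>x. (*\<^sub>R) (1 / \<gamma>) ` B x)"
      using mono_scaled[OF \<open>mono_op B\<close>] \<open>0 < \<gamma>\<close> by simp
    moreover have "A x \<subseteq> (*\<^sub>R) (1 / \<gamma>) ` B x" for x
    proof
      fix u assume "u \<in> A x"
      hence "\<gamma> *\<^sub>R u \<in> B x"
        using sub by blast
      moreover have "u = (1 / \<gamma>) *\<^sub>R (\<gamma> *\<^sub>R u)"
        using \<open>0 < \<gamma>\<close> by simp
      ultimately show "u \<in> (*\<^sub>R) (1 / \<gamma>) ` B x"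
        by blast
    qed
    ultimately have "(\<lambda>x. (*\<^sub>R) (1 / \<gamma>) ` B x) = A"
      using max by (simp add: max_mono_op_def)
    moreover have "B x = (*\<^sub>R) \<gamma> ` (*\<^sub>R) (1 / \<gamma>) ` B x" for x
      using \<open>0 < \<gamma>\<close> by (simp add: image_image)
    ultimately show ?thesis
      by (metis (no_types))
  qed
  thus ?thesis
    using mono_scaled max \<open>0 < \<gamma>\<close> unfolding max_mono_op_def by blast
qed

lemma inv_op_inv_op [simp]: "inv_op (inv_op A) = A"
  by (simp add: inv_op_def)

lemma mono_op_inv_op: "mono_op A \<Longrightarrow> mono_op (inv_op A)"
  unfolding mono_op_def inv_op_def by (simp, metis inner_commute)

lemma max_mono_op_inv_op:
  assumes max: "max_mono_op A"
  shows "max_mono_op (inv_op A)"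
proof -
  have "B = inv_op A" if "mono_op B" "\<forall>x. inv_op A x \<subseteq> B x" for B
  proof -
    have "\<forall>x. A x \<subseteq> inv_op B x"
      using that(2) by (auto simp: inv_op_def)
    hence "inv_op B = A"
      using max mono_op_inv_op[OF that(1)] by (simp add: max_mono_op_def)
    thus ?thesis
      by (metis inv_op_inv_op)
  qed
  thus ?thesis
    using max mono_op_inv_op unfolding max_mono_op_def by blast
qed

lemma dom_op_inv_op: "dom_op (inv_op A) = ran_op A"
  by (auto simp: dom_op_def ran_op_def inv_op_def)

lemma resolvent_inv_op:
  fixes A :: "'a::{real_inner,complete_space} \<Rightarrow> 'a set"
  assumes "max_mono_op A"
  shows "resolvent (inv_op A) y = y - resolvent A y"
proof (rule resolvent_eqI)
  show "mono_op (inv_op A)"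
    using max_mono_op_inv_op[OF assms] by (simp add: max_mono_op_def)
  show "y - (y - resolvent A y) \<in> inv_op A (y - resolvent A y)"
    using resolvent_in_graph[OF assms, of y] by (simp add: inv_op_def)
qed

lemma quadratic_le_imp_le:
  fixes t \<gamma> K C :: real
  assumes "0 \<le> \<gamma>" "0 \<le> K" "0 \<le> C" "t\<^sup>2 \<le> \<gamma> * (K * t + C)"
  shows "t \<le> \<gamma> * K + sqrt (\<gamma> * C)"
proof (rule ccontr)
  define r where "r = sqrt (\<gamma> * C)"
  have "0 \<le> r" "r * r = \<gamma> * C"
    using assms by (simp_all add: r_def)
  assume "\<not> t \<le> \<gamma> * K + sqrt (\<gamma> * C)"
  hence "\<gamma> * K + r < t"
    by (simp add: r_def)
  moreover have "0 \<le> \<gamma> * K"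
    using assms by simp
  ultimately have "r \<le> t" "0 < t"
    using \<open>0 \<le> r\<close> by linarith+
  have "t * (\<gamma> * K + r) < t * t"
    using \<open>\<gamma> * K + r < t\<close> \<open>0 < t\<close> by (rule mult_strict_left_mono)
  moreover have "r * r \<le> t * r"
    using \<open>r \<le> t\<close> \<open>0 \<le> r\<close> by (rule mult_right_mono)
  ultimately show False
    using assms(4) \<open>r * r = \<gamma> * C\<close> by (simp add: power2_eq_square algebra_simps)
qed

text \<open>The witness is the resolvent of \<open>\<gamma> A\<close> at \<open>m\<close>; testing monotonicity against
  \<open>(a1, s1)\<close> and \<open>(a2, s2)\<close> yields a quadratic inequality for its distance to \<open>m\<close>.\<close>

lemma dom_op_near_convex_combination:
  fixes A :: "'a::{real_inner,complete_space} \<Rightarrow> 'a set"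
  assumes max: "max_mono_op A" and s: "s1 \<in> A a1" "s2 \<in> A a2"
    and u: "0 \<le> u" "u \<le> 1" and "0 < \<gamma>"
  defines "m \<equiv> (1 - u) *\<^sub>R a1 + u *\<^sub>R a2"
  shows "\<exists>x\<in>dom_op A. norm (x - m) \<le> \<gamma> * (norm s1 + norm s2)
           + sqrt (\<gamma> * (norm (m - a1) * norm s1 + norm (m - a2) * norm s2))"
proof -
  have "mono_op A"
    using max by (simp add: max_mono_op_def)
  obtain x where "m - x \<in> (*\<^sub>R) \<gamma> ` A x"
    using minty_surjective[OF max_mono_op_scaleR[OF max \<open>0 < \<gamma>\<close>]] by blast
  then obtain w where w: "w \<in> A x" "x - m = - (\<gamma> *\<^sub>R w)"
    by (auto simp: algebra_simps)
  define t where "t = norm (x - m)"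
  have bound: "inner (x - a) (x - m) \<le> \<gamma> * ((t + norm (m - a)) * norm s)" if "s \<in> A a" for a s
  proof -
    have "inner (x - a) s \<le> inner (x - a) w"
      using \<open>mono_op A\<close> w(1) that by (simp add: mono_op_def inner_diff_right)
    hence "inner (x - a) (x - m) \<le> \<gamma> * - inner (x - a) s"
      using w(2) \<open>0 < \<gamma>\<close> by simp
    also have "\<dots> \<le> \<gamma> * (norm (x - a) * norm s)"
      using Cauchy_Schwarz_ineq2[of "x - a" s] \<open>0 < \<gamma>\<close> by (intro mult_left_mono) auto
    also have "\<dots> \<le> \<gamma> * ((t + norm (m - a)) * norm s)"
      using norm_triangle_ineq[of "x - m" "m - a"] \<open>0 < \<gamma>\<close>
      by (intro mult_left_mono mult_right_mono) (auto simp: t_def)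
    finally show ?thesis .
  qed
  have "(1 - u) *\<^sub>R (x - a1) + u *\<^sub>R (x - a2) = x - m"
    by (simp add: m_def algebra_simps)
  hence "t\<^sup>2 = inner ((1 - u) *\<^sub>R (x - a1) + u *\<^sub>R (x - a2)) (x - m)"
    by (simp only: t_def power2_norm_eq_inner)
  also have "\<dots> = (1 - u) * inner (x - a1) (x - m) + u * inner (x - a2) (x - m)"
    by (simp only: inner_add_left inner_scaleR_left)
  also have "\<dots> \<le> (1 - u) * (\<gamma> * ((t + norm (m - a1)) * norm s1))
      + u * (\<gamma> * ((t + norm (m - a2)) * norm s2))"
    using bound[OF s(1)] bound[OF s(2)] u by (intro add_mono mult_left_mono) auto
  also have "\<dots> \<le> \<gamma> * ((t + norm (m - a1)) * norm s1) + \<gamma> * ((t + norm (m - a2)) * norm s2)"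
    using u \<open>0 < \<gamma>\<close> by (intro add_mono mult_left_le_one_le) (auto simp: t_def)
  also have "\<dots> = \<gamma> * ((norm s1 + norm s2) * t + (norm (m - a1) * norm s1 + norm (m - a2) * norm s2))"
    by (simp add: algebra_simps)
  finally have "t \<le> \<gamma> * (norm s1 + norm s2)
      + sqrt (\<gamma> * (norm (m - a1) * norm s1 + norm (m - a2) * norm s2))"
    using \<open>0 < \<gamma>\<close> by (intro quadratic_le_imp_le) auto
  thus ?thesis
    using w(1) by (auto simp: t_def dom_op_def)
qed

lemma convex_combination_in_closure_dom_op:
  fixes A :: "'a::{real_inner,complete_space} \<Rightarrow> 'a set"
  assumes max: "max_mono_op A" and a: "a1 \<in> dom_op A" "a2 \<in> dom_op A" and u: "0 \<le> u" "u \<le> 1"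
  shows "(1 - u) *\<^sub>R a1 + u *\<^sub>R a2 \<in> closure (dom_op A)"
proof -
  obtain s1 s2 where s: "s1 \<in> A a1" "s2 \<in> A a2"
    using a by (auto simp: dom_op_def)
  define m where "m = (1 - u) *\<^sub>R a1 + u *\<^sub>R a2"
  define bound where "bound \<gamma> = \<gamma> * (norm s1 + norm s2)
    + sqrt (\<gamma> * (norm (m - a1) * norm s1 + norm (m - a2) * norm s2))" for \<gamma>
  have "\<forall>n. \<exists>x. x \<in> dom_op A \<and> norm (x - m) \<le> bound (inverse (Suc n))"
    using dom_op_near_convex_combination[OF max s u] by (simp add: m_def bound_def Bex_def)
  from choice[OF this] obtain xs
    where xs: "\<forall>n. xs n \<in> dom_op A \<and> norm (xs n - m) \<le> bound (inverse (Suc n))"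
    by blast
  have "(\<lambda>n. bound (inverse (Suc n))) \<longlonglongrightarrow> bound 0"
    unfolding bound_def by (intro tendsto_intros LIMSEQ_inverse_real_of_nat)
  hence "(\<lambda>n. bound (inverse (Suc n))) \<longlonglongrightarrow> 0"
    by (simp add: bound_def)
  hence "(\<lambda>n. xs n - m) \<longlonglongrightarrow> 0"
    by (rule Lim_null_comparison[OF always_eventually, rotated]) (use xs in auto)
  hence "xs \<longlonglongrightarrow> m"
    by (simp add: LIM_zero_iff)
  with xs show ?thesis
    unfolding m_def[symmetric] closure_sequential by blast
qed

lemma convex_closure_dom_op:
  fixes A :: "'a::{real_inner,complete_space} \<Rightarrow> 'a set"
  assumes "max_mono_op A"
  shows "convex (closure (dom_op A))"
  using convex_combination_in_closure_dom_op[OF assms]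
  by (intro convex_closure_if_combinations_in_closure)

lemma convex_closure_ran_op:
  fixes A :: "'a::{real_inner,complete_space} \<Rightarrow> 'a set"
  assumes "max_mono_op A"
  shows "convex (closure (ran_op A))"
  using convex_closure_dom_op[OF max_mono_op_inv_op[OF assms]] by (simp add: dom_op_inv_op)

section \<open>Firmly nonexpansive iterations\<close>

definition firmly_nonexpansive :: "('a::real_inner \<Rightarrow> 'a) \<Rightarrow> bool" where
  "firmly_nonexpansive f \<longleftrightarrow>
     (\<forall>x y. (norm (f x - f y))\<^sup>2 + (norm ((x - f x) - (y - f y)))\<^sup>2 \<le> (norm (x - y))\<^sup>2)"

lemma firmly_nonexpansive_imp_nonexpansive:
  assumes "firmly_nonexpansive f"
  shows "norm (f x - f y) \<le> norm (x - y)"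
proof -
  have "(norm (f x - f y))\<^sup>2 \<le> (norm (x - y))\<^sup>2"
    using assms unfolding firmly_nonexpansive_def by (smt (verit) zero_le_power2)
  thus ?thesis
    by (rule power2_le_imp_le) simp
qed

lemma funpow_nonexpansive:
  fixes f :: "'a::real_normed_vector \<Rightarrow> 'a"
  assumes "\<And>x y. norm (f x - f y) \<le> norm (x - y)"
  shows "norm ((f ^^ n) x - (f ^^ n) y) \<le> norm (x - y)"
  by (induction n) (auto intro: order_trans[OF assms])

lemma nonexpansive_orbit_dist_le:
  fixes f :: "'a::real_normed_vector \<Rightarrow> 'a"
  assumes ne: "\<And>x y. norm (f x - f y) \<le> norm (x - y)"
  shows "norm ((f ^^ n) x - (f ^^ (n + k)) x) \<le> 2 * norm (x - z) + real k * norm (z - f z)"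
proof -
  have displacement: "norm (z - (f ^^ k) z) \<le> real k * norm (z - f z)" for k
  proof (induction k)
    case (Suc k)
    have "norm (z - (f ^^ Suc k) z) \<le> norm (z - (f ^^ k) z) + norm ((f ^^ k) z - (f ^^ k) (f z))"
      using norm_triangle_ineq[of "z - (f ^^ k) z" "(f ^^ k) z - (f ^^ k) (f z)"]
      by (simp add: funpow_Suc_right del: funpow.simps)
    also have "\<dots> \<le> real k * norm (z - f z) + norm (z - f z)"
      using Suc.IH funpow_nonexpansive[OF ne, of k z "f z"] by linarith
    finally show ?case
      by (simp add: algebra_simps)
  qed simp
  have "norm ((f ^^ n) x - (f ^^ (n + k)) x) \<le> norm (x - (f ^^ k) x)"
    using funpow_nonexpansive[OF ne, of n x "(f ^^ k) x"] by (simp add: funpow_add)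
  also have "\<dots> \<le> norm (x - z) + (norm (z - (f ^^ k) z) + norm ((f ^^ k) z - (f ^^ k) x))"
    by (rule norm_diff_triangle_le[OF order_refl norm_diff_triangle_le[OF order_refl order_refl]])
  also have "\<dots> \<le> 2 * norm (x - z) + real k * norm (z - f z)"
    using displacement[of k] funpow_nonexpansive[OF ne, of k z x] by (simp add: norm_minus_commute)
  finally show ?thesis .
qed

lemma firmly_nonexpansive_step_differences:
  fixes f :: "'a::real_inner \<Rightarrow> 'a" and x :: 'a
  assumes "firmly_nonexpansive f"
  defines "w \<equiv> \<lambda>n. (f ^^ n) x - (f ^^ Suc n) x"
  shows "decseq (\<lambda>n. norm (w n))" and "(\<lambda>n. w n - w (Suc n)) \<longlonglongrightarrow> 0"
proof -
  have step: "(norm (w (Suc n)))\<^sup>2 + (norm (w n - w (Suc n)))\<^sup>2 \<le> (norm (w n))\<^sup>2" for n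
    using assms(1) unfolding firmly_nonexpansive_def w_def
    by (metis (no_types, lifting) funpow.simps(2) o_apply)
  show dec: "decseq (\<lambda>n. norm (w n))"
  proof (rule decseq_SucI)
    fix n
    have "(norm (w (Suc n)))\<^sup>2 \<le> (norm (w n))\<^sup>2"
      using step[of n] by (smt (verit) zero_le_power2)
    thus "norm (w (Suc n)) \<le> norm (w n)"
      by (rule power2_le_imp_le) simp
  qed
  obtain L where L: "(\<lambda>n. norm (w n)) \<longlonglongrightarrow> L"
    using decseq_convergent[OF dec, of 0] by auto
  show "(\<lambda>n. w n - w (Suc n)) \<longlonglongrightarrow> 0"
  proof (rule Lim_null_comparison[OF always_eventually])
    show "\<forall>n. norm (w n - w (Suc n)) \<le> sqrt ((norm (w n))\<^sup>2 - (norm (w (Suc n)))\<^sup>2)"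
    proof
      fix n
      have "(norm (w n - w (Suc n)))\<^sup>2 \<le> (norm (w n))\<^sup>2 - (norm (w (Suc n)))\<^sup>2"
        using step[of n] by linarith
      thus "norm (w n - w (Suc n)) \<le> sqrt ((norm (w n))\<^sup>2 - (norm (w (Suc n)))\<^sup>2)"
        by (simp add: real_le_rsqrt)
    qed
    have "(\<lambda>n. sqrt ((norm (w n))\<^sup>2 - (norm (w (Suc n)))\<^sup>2)) \<longlonglongrightarrow> sqrt (L\<^sup>2 - L\<^sup>2)"
      by (intro tendsto_intros L LIMSEQ_Suc[OF L])
    thus "(\<lambda>n. sqrt ((norm (w n))\<^sup>2 - (norm (w (Suc n)))\<^sup>2)) \<longlonglongrightarrow> 0"
      by simp
  qed
qed

lemma le_if_nat_mult_le_add: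
  fixes L a b :: real
  assumes "\<And>k::nat. real k * L \<le> a + real k * b"
  shows "L \<le> b"
proof (rule ccontr)
  assume "\<not> L \<le> b"
  moreover obtain k :: nat where "a / (L - b) < real k"
    using reals_Archimedean2 by blast
  ultimately have "a < real k * (L - b)"
    by (simp add: divide_less_eq mult.commute)
  thus False
    using assms[of k] by (simp add: algebra_simps)
qed

text \<open>For fixed \<open>k\<close> the steps \<open>w n, \<dots>, w (n + k - 1)\<close> become nearly equal, so \<open>k * L\<close> is
  at most the length of a \<open>k\<close>-step orbit segment, which grows at most like \<open>k\<close> times the
  displacement at any point \<open>z\<close>.\<close>

lemma nonexpansive_step_limit_le_displacement:
  fixes f :: "'a::real_normed_vector \<Rightarrow> 'a" and x :: 'a
  assumes ne: "\<And>u v. norm (f u - f v) \<le> norm (u - v)"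
  defines "w \<equiv> \<lambda>n. (f ^^ n) x - (f ^^ Suc n) x"
  assumes L: "(\<lambda>n. norm (w n)) \<longlonglongrightarrow> L" and diff: "(\<lambda>n. w n - w (Suc n)) \<longlonglongrightarrow> 0"
  shows "L \<le> norm (z - f z)"
proof (rule le_if_nat_mult_le_add)
  fix k
  have diff_j: "(\<lambda>n. w n - w (n + j)) \<longlonglongrightarrow> 0" for j
  proof -
    have "(\<lambda>n. \<Sum>i<j. w (n + i) - w (Suc (n + i))) \<longlonglongrightarrow> (\<Sum>i<j. 0)"
      using LIMSEQ_ignore_initial_segment[OF diff] by (intro tendsto_sum) (simp add: add.commute)
    moreover have "w n - w (n + j) = (\<Sum>i<j. w (n + i) - w (Suc (n + i)))" for n
      using sum_lessThan_telescope'[of "\<lambda>i. w (n + i)" j] by simp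
    ultimately show ?thesis
      by simp
  qed
  have "real k * norm (w n)
      \<le> 2 * norm (x - z) + real k * norm (z - f z) + (\<Sum>j<k. norm (w n - w (n + j)))" for n
  proof -
    have "real k *\<^sub>R w n = (\<Sum>j<k. w (n + j)) + (\<Sum>j<k. w n - w (n + j))"
      by (simp add: sum_subtractf sum_constant_scaleR)
    moreover have "(\<Sum>j<k. w (n + j)) = (f ^^ n) x - (f ^^ (n + k)) x"
      using sum_lessThan_telescope'[of "\<lambda>j. (f ^^ (n + j)) x" k] by (simp add: w_def)
    ultimately have "real k * norm (w n)
        \<le> norm ((f ^^ n) x - (f ^^ (n + k)) x) + norm (\<Sum>j<k. w n - w (n + j))"
      by (metis norm_scaleR abs_of_nat norm_triangle_ineq of_nat_0_le_iff)
    thus ?thesis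
      using nonexpansive_orbit_dist_le[OF ne, of n x k z] norm_sum[of "\<lambda>j. w n - w (n + j)" "{..<k}"]
      by linarith
  qed
  moreover have "(\<lambda>n. real k * norm (w n)) \<longlonglongrightarrow> real k * L"
    by (intro tendsto_intros L)
  moreover have "(\<lambda>n. 2 * norm (x - z) + real k * norm (z - f z) + (\<Sum>j<k. norm (w n - w (n + j))))
      \<longlonglongrightarrow> 2 * norm (x - z) + real k * norm (z - f z) + (\<Sum>j<k. norm (0::'a))"
    by (intro tendsto_intros diff_j)
  ultimately show "real k * L \<le> 2 * norm (x - z) + real k * norm (z - f z)"
    using LIMSEQ_le by fastforce
qed

lemma firmly_nonexpansive_step_tendsto:
  fixes f :: "'a::real_inner \<Rightarrow> 'a"
  assumes firm: "firmly_nonexpansive f"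
  shows "(\<lambda>n. norm ((f ^^ n) x - (f ^^ Suc n) x)) \<longlonglongrightarrow> Inf (norm ` range (\<lambda>z. z - f z))"
proof -
  define w where "w n = (f ^^ n) x - (f ^^ Suc n) x" for n
  define \<delta> where "\<delta> = Inf (norm ` range (\<lambda>z. z - f z))"
  have w_ge: "\<delta> \<le> norm (w n)" for n
    unfolding \<delta>_def w_def by (intro Inf_norm_le_norm_closure closure_subset[THEN subsetD]) simp
  have "decseq (\<lambda>n. norm (w n))"
    unfolding w_def by (rule firmly_nonexpansive_step_differences(1)[OF firm])
  then obtain L where L: "(\<lambda>n. norm (w n)) \<longlonglongrightarrow> L"
    using decseq_convergent w_ge by blast
  have diff: "(\<lambda>n. w n - w (Suc n)) \<longlonglongrightarrow> 0"
    unfolding w_def by (rule firmly_nonexpansive_step_differences(2)[OF firm])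
  have "L \<le> norm (z - f z)" for z
    using firmly_nonexpansive_imp_nonexpansive[OF firm] L diff unfolding w_def
    by (rule nonexpansive_step_limit_le_displacement)
  hence "L \<le> \<delta>"
    unfolding \<delta>_def by (intro cInf_greatest) auto
  moreover have "\<delta> \<le> L"
    using L w_ge by (intro LIMSEQ_le_const) auto
  ultimately have "L = \<delta>"
    by simp
  thus ?thesis
    using L unfolding w_def \<delta>_def by simp
qed

section \<open>The Douglas--Rachford iteration\<close>

lemma firmly_nonexpansive_DR_op:
  fixes A B :: "'a::{real_inner,complete_space} \<Rightarrow> 'a set"
  assumes max_A: "max_mono_op A" and max_B: "max_mono_op B"
  shows "firmly_nonexpansive (DR_op A B)"
  unfolding firmly_nonexpansive_def
proof (intro allI)
  fix x x'
  define a a' where "a = resolvent A x" and "a' = resolvent A x'"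
  define b b' where "b = resolvent B (2 *\<^sub>R a - x)" and "b' = resolvent B (2 *\<^sub>R a' - x')"
  have "x - a \<in> A a" "x' - a' \<in> A a'"
    using resolvent_in_graph[OF max_A] by (simp_all add: a_def a'_def)
  hence mono_A: "0 \<le> inner (a - a') ((x - a) - (x' - a'))"
    using max_A by (simp add: max_mono_op_def mono_op_def)
  have "(2 *\<^sub>R a - x) - b \<in> B b" "(2 *\<^sub>R a' - x') - b' \<in> B b'"
    using resolvent_in_graph[OF max_B] by (simp_all add: b_def b'_def)
  hence mono_B: "0 \<le> inner (b - b') (((2 *\<^sub>R a - x) - b) - ((2 *\<^sub>R a' - x') - b'))"
    using max_B by (simp add: max_mono_op_def mono_op_def)
  have T: "DR_op A B x = x - a + b" "DR_op A B x' = x' - a' + b'"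
    by (simp_all add: DR_op_def reflected_resolvent_def a_def a'_def b_def b'_def)
  have "inner (DR_op A B x - DR_op A B x') ((x - DR_op A B x) - (x' - DR_op A B x'))
      = inner (a - a') ((x - a) - (x' - a'))
        + inner (b - b') (((2 *\<^sub>R a - x) - b) - ((2 *\<^sub>R a' - x') - b'))"
    unfolding T by (simp add: inner_diff_left inner_diff_right inner_add_left inner_add_right
        inner_commute scaleR_2 algebra_simps)
  hence "0 \<le> inner (DR_op A B x - DR_op A B x') ((x - DR_op A B x) - (x' - DR_op A B x'))"
    using mono_A mono_B by simp
  from norm_sq_add_ge_if_inner_nonneg[OF this]
  show "(norm (DR_op A B x - DR_op A B x'))\<^sup>2
      + (norm ((x - DR_op A B x) - (x' - DR_op A B x')))\<^sup>2 \<le> (norm (x - x'))\<^sup>2"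
    by simp
qed

lemma DR_orbit_increments:
  fixes A B :: "'a::{real_inner,complete_space} \<Rightarrow> 'a set" and x :: 'a
  assumes max_A: "max_mono_op A" and max_B: "max_mono_op B"
  defines "y \<equiv> \<lambda>n. (DR_op A B ^^ n) x"
  defines "w \<equiv> \<lambda>n. y n - y (Suc n)"
    and "u \<equiv> \<lambda>n. resolvent A (y n) - resolvent A (y (Suc n))"
    and "u' \<equiv> \<lambda>n. resolvent (inv_op A) (y n) - resolvent (inv_op A) (y (Suc n))"
    and "D \<equiv> {a - b | a b. a \<in> dom_op A \<and> b \<in> dom_op B}"
    and "R \<equiv> {a' + b' | a' b'. a' \<in> ran_op A \<and> b' \<in> ran_op B}"
  shows "w n \<in> D" "w n \<in> R" "u n \<in> R" "u' n \<in> D"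
    and "u n + u' n = w n" "0 \<le> inner (u n) (u' n)"
    and "u n + w (Suc n) \<in> D" "u' n + w (Suc n) \<in> R"
proof -
  define a where "a n = resolvent A (y n)" for n
  define b where "b n = resolvent B (2 *\<^sub>R a n - y n)" for n
  define a' where "a' n = y n - a n" for n
  define b' where "b' n = (2 *\<^sub>R a n - y n) - b n" for n
  have graph: "a' n \<in> A (a n)" "b' n \<in> B (b n)" for n
    using resolvent_in_graph[OF max_A] resolvent_in_graph[OF max_B]
    by (simp_all add: a_def a'_def b_def b'_def)
  hence dom_ran: "a n \<in> dom_op A" "b n \<in> dom_op B" "a' n \<in> ran_op A" "b' n \<in> ran_op B" for n
    by (auto simp: dom_op_def ran_op_def)
  have y_Suc: "y (Suc n) = y n - a n + b n" for n
    by (simp add: y_def a_def b_def DR_op_def reflected_resolvent_def)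
  have u_eq: "u n = a n - a (Suc n)"
    by (simp add: u_def a_def)
  have u'_eq: "u' n = a' n - a' (Suc n)"
    using resolvent_inv_op[OF max_A] by (simp add: u'_def a'_def a_def)
  have "w n = a n - b n" "w n = a' n + b' n"
    by (simp_all add: w_def y_Suc a'_def b'_def algebra_simps scaleR_2)
  moreover have "u n = a' (Suc n) + b' n" "u' n = a (Suc n) - b n"
    by (simp_all add: u_eq u'_eq a'_def b'_def y_Suc algebra_simps scaleR_2)
  moreover have "u n + w (Suc n) = a n - b (Suc n)" "u' n + w (Suc n) = a' n + b' (Suc n)"
    by (simp_all add: u_eq u'_eq w_def a'_def b'_def y_Suc algebra_simps scaleR_2)
  ultimately show "w n \<in> D" "w n \<in> R" "u n \<in> R" "u' n \<in> D"
    "u n + w (Suc n) \<in> D" "u' n + w (Suc n) \<in> R"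
    unfolding D_def R_def using dom_ran by blast+
  show "u n + u' n = w n"
    by (simp add: u_eq u'_eq w_def a'_def)
  show "0 \<le> inner (u n) (u' n)"
    using max_A graph(1)[of n] graph(1)[of "Suc n"]
    by (simp add: u_eq u'_eq max_mono_op_def mono_op_def)
qed

lemma tendsto_0_iff_0_in_closure:
  fixes w p q :: "nat \<Rightarrow> 'a::real_inner" and P Q :: "'a set"
  assumes convex: "convex (closure P)" "convex (closure Q)"
    and w_lim: "(\<lambda>n. norm (w n)) \<longlonglongrightarrow> \<delta>"
    and \<delta>_le: "\<And>z. z \<in> closure P \<Longrightarrow> z \<in> closure Q \<Longrightarrow> \<delta> \<le> norm z"
    and mem: "\<And>n. p n \<in> P" "\<And>n. q n \<in> Q" "\<And>n. w n \<in> Q" "\<And>n. q n + w (Suc n) \<in> P"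
    and split: "\<And>n. p n + q n = w n" "\<And>n. 0 \<le> inner (p n) (q n)"
  shows "p \<longlonglongrightarrow> 0 \<longleftrightarrow> 0 \<in> closure P"
proof
  assume "p \<longlonglongrightarrow> 0"
  with mem(1) show "0 \<in> closure P"
    by (intro closure_sequential[THEN iffD2, OF exI[of _ p]]) simp
next
  assume "0 \<in> closure P"
  have "0 \<le> \<delta>"
    using w_lim by (rule tendsto_lowerbound) auto
  have q_ge: "2 * \<delta> - norm (w (Suc n)) \<le> norm (q n)" for n
  proof -
    have "midpoint (q n) (w (Suc n)) \<in> closure Q"
      using mem(2,3)[THEN closure_subset[THEN subsetD]] by (rule midpoint_in_convex[OF convex(2)])
    moreover have "midpoint (q n + w (Suc n)) 0 \<in> closure P"
      using mem(4)[THEN closure_subset[THEN subsetD]] \<open>0 \<in> closure P\<close>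
      by (rule midpoint_in_convex[OF convex(1)])
    moreover have "midpoint (q n + w (Suc n)) 0 = midpoint (q n) (w (Suc n))"
      by (simp add: midpoint_def)
    ultimately have "\<delta> \<le> norm (midpoint (q n) (w (Suc n)))"
      by (intro \<delta>_le) simp_all
    also have "\<dots> \<le> (norm (q n) + norm (w (Suc n))) / 2"
      using norm_triangle_ineq[of "q n" "w (Suc n)"] by (simp add: midpoint_def)
    finally show ?thesis
      by simp
  qed
  define g where "g n = sqrt ((norm (w n))\<^sup>2 - (max 0 (2 * \<delta> - norm (w (Suc n))))\<^sup>2)" for n
  show "p \<longlonglongrightarrow> 0"
  proof (rule Lim_null_comparison[OF always_eventually])
    show "\<forall>n. norm (p n) \<le> g n"
    proof
      fix n
      have "(max 0 (2 * \<delta> - norm (w (Suc n))))\<^sup>2 \<le> (norm (q n))\<^sup>2"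
        using q_ge[of n] by (intro power_mono) auto
      moreover have "(norm (p n))\<^sup>2 + (norm (q n))\<^sup>2 \<le> (norm (w n))\<^sup>2"
        using norm_sq_add_ge_if_inner_nonneg[OF split(2)[of n]] unfolding split(1) .
      ultimately show "norm (p n) \<le> g n"
        unfolding g_def by (intro real_le_rsqrt) linarith
    qed
    have "g \<longlonglongrightarrow> sqrt (\<delta>\<^sup>2 - (max 0 (2 * \<delta> - \<delta>))\<^sup>2)"
      unfolding g_def by (intro tendsto_intros w_lim LIMSEQ_Suc[OF w_lim])
    thus "g \<longlonglongrightarrow> 0"
      using \<open>0 \<le> \<delta>\<close> by simp
  qed
qed

theorem proposition5p2:
  fixes A B :: "'a::{real_inner, complete_space} \<Rightarrow> 'a set"
    and x :: 'a
  assumes "max_mono_op A" and "max_mono_op B"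
    and "closure (range (\<lambda>y. y - DR_op A B y))
           = closure ({a - b | a b. a \<in> dom_op A \<and> b \<in> dom_op B}
                      \<inter> {u + v | u v. u \<in> ran_op A \<and> v \<in> ran_op B})"
    and "closure ({a - b | a b. a \<in> dom_op A \<and> b \<in> dom_op B}
                      \<inter> {u + v | u v. u \<in> ran_op A \<and> v \<in> ran_op B})
           = closure {a - b | a b. a \<in> dom_op A \<and> b \<in> dom_op B}
             \<inter> closure {u + v | u v. u \<in> ran_op A \<and> v \<in> ran_op B}"
  shows "(asymp_regular (\<lambda>n. resolvent A ((DR_op A B ^^ n) x)) \<longleftrightarrow>
            proj (closure {u + v | u v. u \<in> ran_op A \<and> v \<in> ran_op B}) 0 = 0)
       \<and> (asymp_regular (\<lambda>n. resolvent (inv_op A) ((DR_op A B ^^ n) x)) \<longleftrightarrow>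
            proj (closure {a - b | a b. a \<in> dom_op A \<and> b \<in> dom_op B}) 0 = 0)"
proof -
  define D where "D = {a - b | a b. a \<in> dom_op A \<and> b \<in> dom_op B}"
  define R where "R = {u + v | u v. u \<in> ran_op A \<and> v \<in> ran_op B}"
  note increments = DR_orbit_increments[OF assms(1,2), where x=x, folded D_def R_def]
  have w_lim: "(\<lambda>n. norm ((DR_op A B ^^ n) x - (DR_op A B ^^ Suc n) x))
      \<longlonglongrightarrow> Inf (norm ` range (\<lambda>y. y - DR_op A B y))"
    by (rule firmly_nonexpansive_step_tendsto[OF firmly_nonexpansive_DR_op[OF assms(1,2)]])
  have \<delta>_le: "Inf (norm ` range (\<lambda>y. y - DR_op A B y)) \<le> norm z"
    if "z \<in> closure D" "z \<in> closure R" for z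
    using that assms(3,4) by (intro Inf_norm_le_norm_closure) (simp add: D_def R_def)
  have convex: "convex (closure D)" "convex (closure R)"
    unfolding D_def R_def
    by (rule convex_closure_differences convex_closure_sums;
        rule convex_closure_dom_op convex_closure_ran_op; rule assms)+
  have "closure D \<noteq> {}" "closure R \<noteq> {}"
    using increments(1,2) by (auto simp: closure_eq_empty)
  hence proj_0: "proj (closure D) 0 = 0 \<longleftrightarrow> 0 \<in> closure D"
      "proj (closure R) 0 = 0 \<longleftrightarrow> 0 \<in> closure R"
    using convex by (simp_all add: proj_eq_self_iff)
  have "asymp_regular (\<lambda>n. resolvent A ((DR_op A B ^^ n) x)) \<longleftrightarrow> 0 \<in> closure R"
    unfolding asymp_regular_def
    by (rule tendsto_0_iff_0_in_closure[OF convex(2,1) w_lim \<delta>_le increments(3,4,1,8,5,6)])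
  moreover have "asymp_regular (\<lambda>n. resolvent (inv_op A) ((DR_op A B ^^ n) x)) \<longleftrightarrow> 0 \<in> closure D"
    unfolding asymp_regular_def
    by (rule tendsto_0_iff_0_in_closure[OF convex w_lim \<delta>_le increments(4,3,2,7)
          trans[OF add.commute increments(5)] ord_le_eq_trans[OF increments(6) inner_commute]])
  ultimately show ?thesis
    using proj_0 by (simp add: D_def R_def)
qed

end
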